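(* Let $W$ be a real $N\times N$ matrix, $M$ a real $n\times N$ matrix with Moore–Penrose pseudoinverse $M^+$ (an $N\times n$ matrix), and for each $i\in\{1,\ldots,N\}$ let $h_i:\mathbb{R}\times\mathbb{R}\to\mathbb{R}$ be analytic. Consider the complete dynamics $\dot x_i=h_i(x_i,y_i)$ with $y_i=\sum_{j=1}^NW_{ij}x_j$, and the least-square reduced dynamics \[\dot X_\mu=\sum_{i=1}^NM_{\mu i}\,h_i(\tilde x_i,\tilde y_i),\qquad \mu\in\{1,\ldots,n\},\] where $\tilde x=M^+X$ and $\tilde y=WM^+X$. Then the reduced dynamics can be expressed in terms of higher-order interactions between the observables as \[\dot X_\mu=\mathcal{C}_\mu+\sum_{d_x=1}^\infty\sum_{\bm\alpha}\mathcal{D}^{(d_x+1)}_{\mu\bm\alpha}X_{\bm\alpha}+\sum_{d_y=1}^\infty\sum_{\bm\beta}\mathcal{W}^{(d_y+1)}_{\mu\bm\beta}X_{\bm\beta}+\sum_{d_x,d_y=1}^\infty\sum_{\bm\alpha,\bm\beta}\mathcal{T}^{(d_x+d_y+1)}_{\mu\bm\alpha\bm\beta}X_{\bm\alpha}X_{\bm\beta},\] where the sums run over multi-indices $\bm\alpha=(\alpha_1,\ldots,\alpha_{d_x})\in\{1,\ldots,n\}^{d_x}$ and $\bm\beta=(\beta_1,\ldots,\beta_{d_y})\in\{1,\ldots,n\}^{d_y}$, $X_{\bm\gamma}=X_{\gamma_1}\cdots X_{\gamma_d}$, $\mathcal{C}_\mu$ is a real constant, and \begin{align*} \mathcal{D}^{(d_x+1)}_{\mu\bm\alpha}&=\sum_{i=1}^Nc_{id_x0}M_{\mu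 i}M^+_{i\alpha_1}\cdots M^+_{i\alpha_{d_x}},\\ \mathcal{W}^{(d_y+1)}_{\mu\bm\beta}&=\sum_{i,j_1,\ldots,j_{d_y}=1}^Nc_{i0d_y}M_{\mu i}W_{ij_1}\cdots W_{ij_{d_y}}M^+_{j_1\beta_1}\cdots M^+_{j_{d_y}\beta_{d_y}},\\ \mathcal{T}^{(d_x+d_y+1)}_{\mu\bm\alpha\bm\beta}&=\sum_{i,j_1,\ldots,j_{d_y}=1}^Nc_{id_xd_y}M_{\mu i}M^+_{i\alpha_1}\cdots M^+_{i\alpha_{d_x}}W_{ij_1}\cdots W_{ij_{d_y}}M^+_{j_1\beta_1}\cdots M^+_{j_{d_y}\beta_{d_y}}, \end{align*} for some real coefficients $c_{id_xd_y}$, $i\in\{1,\ldots,N\}$, $d_x,d_y\in\mathbb{Z}_{\ge0}$. *)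

theory Defs
  imports "HOL-Analysis.Analysis"
begin

text \<open>Moore-Penrose pseudoinverse via the four Penrose conditions (it is unique).\<close>
definition moore_penrose_inverse :: "real^'c^'r \<Rightarrow> real^'r^'c \<Rightarrow> bool" where
  "moore_penrose_inverse A P \<longleftrightarrow>
     A ** P ** A = A \<and> P ** A ** P = P \<and>
     transpose (A ** P) = A ** P \<and> transpose (P ** A) = P ** A"

definition real_analytic2 :: "(real \<Rightarrow> real \<Rightarrow> real) \<Rightarrow> bool" where
  "real_analytic2 f \<longleftrightarrow>
     (\<forall>a b. \<exists>r>0. \<exists>co :: nat \<Rightarrow> nat \<Rightarrow> real. \<forall>x y. \<bar>x - a\<bar> < r \<and> \<bar>y - b\<bar> < r \<longrightarrow>
        ((\<lambda>(k, l). co k l * (x - a) ^ k * (y - b) ^ l) has_sum f x y) UNIV)"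

definition mlists :: "nat \<Rightarrow> 'a list set" where
  "mlists d = {as. length as = d}"

definition Xmono :: "real^'n \<Rightarrow> 'n list \<Rightarrow> real" where
  "Xmono X as = (\<Prod>k<length as. X $ (as ! k))"

definition coefD :: "('N \<Rightarrow> nat \<Rightarrow> nat \<Rightarrow> real) \<Rightarrow> real^'N^'n \<Rightarrow> real^'n^'N \<Rightarrow> 'n \<Rightarrow> 'n list \<Rightarrow> real" where
  "coefD c M Mp \<mu> as =
     (\<Sum>i\<in>UNIV. c i (length as) 0 * M $ \<mu> $ i * (\<Prod>k<length as. Mp $ i $ (as ! k)))"

definition coefW :: "('N \<Rightarrow> nat \<Rightarrow> nat \<Rightarrow> real) \<Rightarrow> real^'N^'n \<Rightarrow> real^'N^'N \<Rightarrow> real^'n^'N \<Rightarrow> 'n \<Rightarrow> 'n list \<Rightarrow> real" where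
  "coefW c M W Mp \<mu> bs =
     (\<Sum>i\<in>UNIV. \<Sum>js\<in>mlists (length bs).
        c i 0 (length bs) * M $ \<mu> $ i * (\<Prod>k<length bs. W $ i $ (js ! k))
          * (\<Prod>k<length bs. Mp $ (js ! k) $ (bs ! k)))"

definition coefT :: "('N \<Rightarrow> nat \<Rightarrow> nat \<Rightarrow> real) \<Rightarrow> real^'N^'n \<Rightarrow> real^'N^'N \<Rightarrow> real^'n^'N \<Rightarrow> 'n \<Rightarrow> 'n list \<Rightarrow> 'n list \<Rightarrow> real" where
  "coefT c M W Mp \<mu> as bs =
     (\<Sum>i\<in>UNIV. \<Sum>js\<in>mlists (length bs).
        c i (length as) (length bs) * M $ \<mu> $ i * (\<Prod>k<length as. Mp $ i $ (as ! k))
          * (\<Prod>k<length bs. W $ i $ (js ! k))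
          * (\<Prod>k<length bs. Mp $ (js ! k) $ (bs ! k)))"

end

theory Submission
  imports Defs
begin

text \<open>
  Expand every \<open>h i\<close> in its double power series at the origin, with coefficients
  \<open>c i k l\<close>. The arguments \<open>x = Mp *v X\<close> and \<open>y = W *v (Mp *v X)\<close> depend linearly on
  \<open>X\<close>, so on an open neighbourhood of \<open>0\<close> every pair \<open>(x $ i, y $ i)\<close> lies inside the
  radius of convergence, and there the reduced field is the sum over \<open>(dx, dy)\<close> of
  \<open>\<Sum>i. M $ \<mu> $ i * c i dx dy * (x $ i) ^ dx * (y $ i) ^ dy\<close>. Multiplying out the powers
  of the linear forms \<open>x $ i\<close> and \<open>y $ i\<close> over multi-indices identifies this term with the
  degree \<open>(dx, dy)\<close> part of the \<open>coefD\<close>, \<open>coefW\<close> or \<open>coefT\<close> series; splitting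
  \<open>\<nat> \<times> \<nat>\<close> into the origin (which gives \<open>C\<close>), the two axes and the open quadrant
  gives the formula.
\<close>

lemma has_sum_sum:
  fixes f :: "'i \<Rightarrow> 'a \<Rightarrow> 'b::topological_comm_monoid_add"
  assumes "finite I" and "\<And>i. i \<in> I \<Longrightarrow> (f i has_sum s i) A"
  shows "((\<lambda>x. \<Sum>i\<in>I. f i x) has_sum (\<Sum>i\<in>I. s i)) A"
  using assms by (induction I rule: finite_induct) (simp_all add: has_sum_add)

lemma has_sum_nat_prod_split:
  fixes g :: "nat \<times> nat \<Rightarrow> 'a::banach"
  assumes "(g has_sum s) UNIV"
  obtains S1 S2 S3 where "((\<lambda>d. g (d, 0)) has_sum S1) {1..}" and "((\<lambda>d. g (0, d)) has_sum S2) {1..}"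
    and "(g has_sum S3) ({1..} \<times> {1..})" and "s = g (0, 0) + S1 + S2 + S3"
proof -
  define axis1 axis2 :: "(nat \<times> nat) set"
    where "axis1 = (\<lambda>d. (d, 0)) ` {1..}" and "axis2 = (\<lambda>d. (0, d)) ` {1..}"
  have summable: "g summable_on A" for A
    using assms summable_on_subset_banach[of g UNIV A] by (auto simp: summable_on_def)
  have "(g has_sum (g (0, 0) + infsum g axis1 + infsum g axis2 + infsum g ({1..} \<times> {1..})))
      ({(0, 0)} \<union> axis1 \<union> axis2 \<union> {1..} \<times> {1..})"
    by (intro has_sum_Un_disjoint has_sum_infsum summable)
      (auto simp: axis1_def axis2_def intro: has_sum_finiteI)
  moreover have "{(0, 0)} \<union> axis1 \<union> axis2 \<union> {1..} \<times> {1..} = UNIV"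
  proof -
    have "(a, b) \<in> {(0, 0)} \<union> axis1 \<union> axis2 \<union> {1..} \<times> {1..}" for a b :: nat
      by (cases "a = 0"; cases "b = 0") (auto simp: axis1_def axis2_def image_iff)
    then show ?thesis
      by (metis UNIV_eq_I surj_pair)
  qed
  ultimately have "s = g (0, 0) + infsum g axis1 + infsum g axis2 + infsum g ({1..} \<times> {1..})"
    using assms has_sum_unique by metis
  moreover have "((\<lambda>d. g (d, 0)) has_sum infsum g axis1) {1..}"
    using has_sum_infsum[OF summable[of axis1]] unfolding axis1_def
    by (subst (asm) has_sum_reindex) (auto simp: inj_on_def comp_def)
  moreover have "((\<lambda>d. g (0, d)) has_sum infsum g axis2) {1..}"
    using has_sum_infsum[OF summable[of axis2]] unfolding axis2_def
    by (subst (asm) has_sum_reindex) (auto simp: inj_on_def comp_def)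
  ultimately show ?thesis
    using that has_sum_infsum[OF summable] by blast
qed

lemma sum_sum_sum_eq_sum_product:
  "(\<Sum>a\<in>A. \<Sum>b\<in>B. \<Sum>i\<in>I. f i a * g i b :: 'c::comm_semiring_0)
     = (\<Sum>i\<in>I. (\<Sum>a\<in>A. f i a) * (\<Sum>b\<in>B. g i b))"
proof -
  have "(\<Sum>a\<in>A. \<Sum>b\<in>B. \<Sum>i\<in>I. f i a * g i b) = (\<Sum>a\<in>A. \<Sum>i\<in>I. \<Sum>b\<in>B. f i a * g i b)"
    by (intro sum.cong refl sum.swap)
  also have "\<dots> = (\<Sum>i\<in>I. \<Sum>a\<in>A. \<Sum>b\<in>B. f i a * g i b)"
    by (rule sum.swap)
  finally show ?thesis
    by (simp add: sum_product)
qed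

lemma open_Collect_abs_matrix_vector_less:
  fixes A :: "real^'n^'m"
  shows "open {X. \<forall>i. \<bar>(A *v X) $ i\<bar> < r i}"
proof -
  have "open {X. \<bar>(A *v X) $ i\<bar> < r i}" for i
    by (intro open_Collect_less continuous_intros)
  then show ?thesis
    unfolding Collect_all_eq by (intro open_INT) auto
qed

lemma real_analytic2_family_at_origin:
  assumes "\<forall>i. real_analytic2 (f i)"
  obtains r co where "\<And>i. r i > 0" and "\<And>i x y. \<bar>x\<bar> < r i \<Longrightarrow> \<bar>y\<bar> < r i \<Longrightarrow>
    ((\<lambda>(k, l). co i k l * x ^ k * y ^ l) has_sum f i x y) UNIV"
proof -
  have "\<forall>i. \<exists>r>0. \<exists>co :: nat \<Rightarrow> nat \<Rightarrow> real. \<forall>x y. \<bar>x - 0\<bar> < r \<and> \<bar>y - 0\<bar> < r \<longrightarrow>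
      ((\<lambda>(k, l). co k l * (x - 0) ^ k * (y - 0) ^ l) has_sum f i x y) UNIV"
    using assms unfolding real_analytic2_def by blast
  then have "\<forall>i. \<exists>r. r > 0 \<and> (\<exists>co :: nat \<Rightarrow> nat \<Rightarrow> real. \<forall>x y. \<bar>x\<bar> < r \<and> \<bar>y\<bar> < r \<longrightarrow>
      ((\<lambda>(k, l). co k l * x ^ k * y ^ l) has_sum f i x y) UNIV)"
    by simp
  from choice[OF this] obtain r where r: "\<forall>i. r i > 0 \<and> (\<exists>co :: nat \<Rightarrow> nat \<Rightarrow> real.
      \<forall>x y. \<bar>x\<bar> < r i \<and> \<bar>y\<bar> < r i \<longrightarrow> ((\<lambda>(k, l). co k l * x ^ k * y ^ l) has_sum f i x y) UNIV)"
    by blast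
  then have "\<forall>i. \<exists>co :: nat \<Rightarrow> nat \<Rightarrow> real. \<forall>x y. \<bar>x\<bar> < r i \<and> \<bar>y\<bar> < r i \<longrightarrow>
      ((\<lambda>(k, l). co k l * x ^ k * y ^ l) has_sum f i x y) UNIV"
    by blast
  from choice[OF this] obtain co where "\<forall>i x y. \<bar>x\<bar> < r i \<and> \<bar>y\<bar> < r i \<longrightarrow>
      ((\<lambda>(k, l). co i k l * x ^ k * y ^ l) has_sum f i x y) UNIV"
    by blast
  then show ?thesis
    using r by (intro that[of r co]) auto
qed

lemma mlists_0: "mlists 0 = {[]}"
  by (auto simp: mlists_def)

lemma mlists_Suc: "mlists (Suc d) = (\<lambda>(a, as). a # as) ` (UNIV \<times> mlists d)"
  by (auto simp: mlists_def length_Suc_conv)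

lemma sum_mlists_prod_nth:
  fixes f :: "nat \<Rightarrow> 'a::finite \<Rightarrow> 'b::comm_semiring_1"
  shows "(\<Sum>as\<in>mlists d. \<Prod>k<d. f k (as ! k)) = (\<Prod>k<d. \<Sum>a\<in>UNIV. f k a)"
proof (induction d arbitrary: f)
  case 0
  show ?case by (simp add: mlists_0)
next
  case (Suc d)
  have "inj_on (\<lambda>(a, as). a # as) (UNIV \<times> mlists d)"
    by (auto simp: inj_on_def)
  then have "(\<Sum>as\<in>mlists (Suc d). \<Prod>k<Suc d. f k (as ! k))
      = (\<Sum>(a, as)\<in>UNIV \<times> mlists d. f 0 a * (\<Prod>k<d. f (Suc k) (as ! k)))"
    unfolding mlists_Suc
    by (subst sum.reindex) (auto simp: case_prod_beta prod.lessThan_Suc_shift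
        simp del: prod.lessThan_Suc)
  also have "\<dots> = (\<Sum>a\<in>UNIV. f 0 a) * (\<Sum>as\<in>mlists d. \<Prod>k<d. f (Suc k) (as ! k))"
    by (simp add: sum.cartesian_product[symmetric] sum_product)
  also have "\<dots> = (\<Prod>k<Suc d. \<Sum>a\<in>UNIV. f k a)"
    by (simp add: Suc.IH[of "\<lambda>k. f (Suc k)"] prod.lessThan_Suc_shift del: prod.lessThan_Suc)
  finally show ?case .
qed

lemma sum_mlists_row_Xmono:
  fixes A :: "real^'n^'m" and X :: "real^'n"
  shows "(\<Sum>as\<in>mlists d. (\<Prod>k<d. A $ i $ (as ! k)) * Xmono X as) = ((A *v X) $ i) ^ d"
proof -
  have "(\<Sum>as\<in>mlists d. (\<Prod>k<d. A $ i $ (as ! k)) * Xmono X as)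
      = (\<Sum>as\<in>mlists d. \<Prod>k<d. A $ i $ (as ! k) * X $ (as ! k))"
    by (rule sum.cong) (auto simp: mlists_def Xmono_def prod.distrib)
  then show ?thesis
    using sum_mlists_prod_nth[of "\<lambda>_ a. A $ i $ a * X $ a" d]
    by (simp add: matrix_vector_mult_def)
qed

lemma sum_mlists_comp_row_Xmono:
  fixes W :: "real^'m^'l" and A :: "real^'n^'m" and X :: "real^'n"
  shows "(\<Sum>bs\<in>mlists d. \<Sum>js\<in>mlists d.
            (\<Prod>k<d. W $ i $ (js ! k)) * ((\<Prod>k<d. A $ (js ! k) $ (bs ! k)) * Xmono X bs))
         = ((W *v (A *v X)) $ i) ^ d"
proof -
  have inner: "(\<Sum>bs\<in>mlists d. (\<Prod>k<d. A $ (js ! k) $ (bs ! k)) * Xmono X bs)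
      = (\<Prod>k<d. (A *v X) $ (js ! k))" for js
  proof -
    have "(\<Sum>bs\<in>mlists d. (\<Prod>k<d. A $ (js ! k) $ (bs ! k)) * Xmono X bs)
        = (\<Sum>bs\<in>mlists d. \<Prod>k<d. A $ (js ! k) $ (bs ! k) * X $ (bs ! k))"
      by (rule sum.cong) (auto simp: mlists_def Xmono_def prod.distrib)
    then show ?thesis
      using sum_mlists_prod_nth[of "\<lambda>k a. A $ (js ! k) $ a * X $ a" d]
      by (simp add: matrix_vector_mult_def)
  qed
  have "(\<Sum>bs\<in>mlists d. \<Sum>js\<in>mlists d.
            (\<Prod>k<d. W $ i $ (js ! k)) * ((\<Prod>k<d. A $ (js ! k) $ (bs ! k)) * Xmono X bs))
      = (\<Sum>js\<in>mlists d. (\<Prod>k<d. W $ i $ (js ! k))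
            * (\<Sum>bs\<in>mlists d. (\<Prod>k<d. A $ (js ! k) $ (bs ! k)) * Xmono X bs))"
    by (subst sum.swap) (simp only: sum_distrib_left)
  also have "\<dots> = (\<Sum>js\<in>mlists d. \<Prod>k<d. W $ i $ (js ! k) * (A *v X) $ (js ! k))"
    by (simp only: inner prod.distrib)
  also have "\<dots> = ((W *v (A *v X)) $ i) ^ d"
    using sum_mlists_prod_nth[of "\<lambda>_ j. W $ i $ j * (A *v X) $ j" d]
    by (simp add: matrix_vector_mult_def)
  finally show ?thesis .
qed

lemma coefT_Nil_right: "coefT c M W Mp \<mu> as [] = coefD c M Mp \<mu> as"
  by (simp add: coefT_def coefD_def mlists_0)

lemma coefT_Nil_left: "coefT c M W Mp \<mu> [] bs = coefW c M W Mp \<mu> bs"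
  by (simp add: coefT_def coefW_def)

lemma coefT_eq_factored:
  "coefT c M W Mp \<mu> as bs =
     (\<Sum>i\<in>UNIV. c i (length as) (length bs) * M $ \<mu> $ i * (\<Prod>k<length as. Mp $ i $ (as ! k))
        * (\<Sum>js\<in>mlists (length bs). (\<Prod>k<length bs. W $ i $ (js ! k))
             * (\<Prod>k<length bs. Mp $ (js ! k) $ (bs ! k))))"
  by (simp add: coefT_def sum_distrib_left mult_ac)

lemma sum_coefT_Xmono:
  fixes M :: "real^'N^'n" and W :: "real^'N^'N" and Mp :: "real^'n^'N" and X :: "real^'n"
  shows "(\<Sum>as\<in>mlists dx. \<Sum>bs\<in>mlists dy. coefT c M W Mp \<mu> as bs * Xmono X as * Xmono X bs)
    = (\<Sum>i\<in>UNIV. M $ \<mu> $ i * c i dx dy * ((Mp *v X) $ i) ^ dx * ((W *v (Mp *v X)) $ i) ^ dy)"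
proof -
  have "(\<Sum>as\<in>mlists dx. \<Sum>bs\<in>mlists dy. coefT c M W Mp \<mu> as bs * Xmono X as * Xmono X bs)
    = (\<Sum>as\<in>mlists dx. \<Sum>bs\<in>mlists dy. \<Sum>i\<in>UNIV.
         (M $ \<mu> $ i * c i dx dy * ((\<Prod>k<dx. Mp $ i $ (as ! k)) * Xmono X as))
         * (\<Sum>js\<in>mlists dy. (\<Prod>k<dy. W $ i $ (js ! k))
              * ((\<Prod>k<dy. Mp $ (js ! k) $ (bs ! k)) * Xmono X bs)))"
    by (intro sum.cong refl)
      (auto simp: mlists_def coefT_eq_factored sum_distrib_left sum_distrib_right mult_ac)
  also have "\<dots> = (\<Sum>i\<in>UNIV.
         (\<Sum>as\<in>mlists dx. M $ \<mu> $ i * c i dx dy * ((\<Prod>k<dx. Mp $ i $ (as ! k)) * Xmono X as))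
         * (\<Sum>bs\<in>mlists dy. \<Sum>js\<in>mlists dy. (\<Prod>k<dy. W $ i $ (js ! k))
              * ((\<Prod>k<dy. Mp $ (js ! k) $ (bs ! k)) * Xmono X bs)))"
    by (rule sum_sum_sum_eq_sum_product)
  finally show ?thesis
    by (simp only: sum_distrib_left[symmetric] sum_mlists_row_Xmono sum_mlists_comp_row_Xmono)
qed

lemma sum_coefD_Xmono:
  fixes M :: "real^'N^'n" and Mp :: "real^'n^'N" and X :: "real^'n"
  shows "(\<Sum>as\<in>mlists dx. coefD c M Mp \<mu> as * Xmono X as)
    = (\<Sum>i\<in>UNIV. M $ \<mu> $ i * c i dx 0 * ((Mp *v X) $ i) ^ dx)"
  using sum_coefT_Xmono[where dy = 0 and c = c and M = M and Mp = Mp and X = X]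
  by (simp add: mlists_0 coefT_Nil_right Xmono_def)

lemma sum_coefW_Xmono:
  fixes M :: "real^'N^'n" and W :: "real^'N^'N" and Mp :: "real^'n^'N" and X :: "real^'n"
  shows "(\<Sum>bs\<in>mlists dy. coefW c M W Mp \<mu> bs * Xmono X bs)
    = (\<Sum>i\<in>UNIV. M $ \<mu> $ i * c i 0 dy * ((W *v (Mp *v X)) $ i) ^ dy)"
  using sum_coefT_Xmono[where dx = 0 and c = c and M = M and W = W and Mp = Mp and X = X]
  by (simp add: mlists_0 coefT_Nil_left Xmono_def)

lemma reduced_field_expansion:
  fixes W :: "real^'N^'N" and M :: "real^'N^'n" and Mp :: "real^'n^'N" and X :: "real^'n"
  assumes "\<And>i. ((\<lambda>(k, l). c i k l * (Mp *v X) $ i ^ k * (W *v (Mp *v X)) $ i ^ l)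
      has_sum h i ((Mp *v X) $ i) ((W *v (Mp *v X)) $ i)) UNIV"
  shows "\<exists>S1 S2 S3.
      ((\<lambda>dx. \<Sum>as\<in>mlists dx. coefD c M Mp \<mu> as * Xmono X as) has_sum S1) {1..} \<and>
      ((\<lambda>dy. \<Sum>bs\<in>mlists dy. coefW c M W Mp \<mu> bs * Xmono X bs) has_sum S2) {1..} \<and>
      ((\<lambda>(dx, dy). \<Sum>as\<in>mlists dx. \<Sum>bs\<in>mlists dy.
          coefT c M W Mp \<mu> as bs * Xmono X as * Xmono X bs) has_sum S3) ({1..} \<times> {1..}) \<and>
      (\<Sum>i\<in>UNIV. M $ \<mu> $ i * h i ((Mp *v X) $ i) ((W *v (Mp *v X)) $ i))
        = (\<Sum>i\<in>UNIV. M $ \<mu> $ i * c i 0 0) + S1 + S2 + S3"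
proof -
  let ?x = "Mp *v X" and ?y = "W *v (Mp *v X)"
  define g where "g = (\<lambda>(dx, dy). \<Sum>i\<in>UNIV. M $ \<mu> $ i * c i dx dy * ?x $ i ^ dx * ?y $ i ^ dy)"
  have "((\<lambda>p. \<Sum>i\<in>UNIV. M $ \<mu> $ i * (\<lambda>(k, l). c i k l * ?x $ i ^ k * ?y $ i ^ l) p)
      has_sum (\<Sum>i\<in>UNIV. M $ \<mu> $ i * h i (?x $ i) (?y $ i))) UNIV"
    by (intro has_sum_sum has_sum_cmult_right assms) simp_all
  moreover have "(\<lambda>p. \<Sum>i\<in>UNIV. M $ \<mu> $ i * (\<lambda>(k, l). c i k l * ?x $ i ^ k * ?y $ i ^ l) p) = g"
    by (auto simp: g_def fun_eq_iff mult.assoc)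
  ultimately have "(g has_sum (\<Sum>i\<in>UNIV. M $ \<mu> $ i * h i (?x $ i) (?y $ i))) UNIV"
    by simp
  then obtain S1 S2 S3
    where "((\<lambda>d. g (d, 0)) has_sum S1) {1..}" and "((\<lambda>d. g (0, d)) has_sum S2) {1..}"
      and "(g has_sum S3) ({1..} \<times> {1..})"
      and "(\<Sum>i\<in>UNIV. M $ \<mu> $ i * h i (?x $ i) (?y $ i)) = g (0, 0) + S1 + S2 + S3"
    by (rule has_sum_nat_prod_split)
  moreover have "(\<lambda>dx. \<Sum>as\<in>mlists dx. coefD c M Mp \<mu> as * Xmono X as) = (\<lambda>d. g (d, 0))"
    by (simp add: fun_eq_iff g_def sum_coefD_Xmono)
  moreover have "(\<lambda>dy. \<Sum>bs\<in>mlists dy. coefW c M W Mp \<mu> bs * Xmono X bs) = (\<lambda>d. g (0, d))"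
    by (simp add: fun_eq_iff g_def sum_coefW_Xmono)
  moreover have "(\<lambda>(dx, dy). \<Sum>as\<in>mlists dx. \<Sum>bs\<in>mlists dy.
      coefT c M W Mp \<mu> as bs * Xmono X as * Xmono X bs) = g"
    by (simp add: fun_eq_iff g_def sum_coefT_Xmono)
  ultimately show ?thesis
    by (intro exI[of _ S1] exI[of _ S2] exI[of _ S3]) (simp add: g_def)
qed

theorem propositionS48:
  fixes W :: "real^'N^'N" and M :: "real^'N^'n" and Mp :: "real^'n^'N"
    and h :: "'N \<Rightarrow> real \<Rightarrow> real \<Rightarrow> real"
  assumes "moore_penrose_inverse M Mp"
    and "\<forall>i. real_analytic2 (h i)"
  shows "\<exists>(c :: 'N \<Rightarrow> nat \<Rightarrow> nat \<Rightarrow> real) (C :: 'n \<Rightarrow> real) (U :: (real^'n) set).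
           open U \<and> 0 \<in> U \<and>
           (\<forall>X\<in>U. \<forall>\<mu>. \<exists>S1 S2 S3.
              ((\<lambda>dx. \<Sum>as\<in>mlists dx. coefD c M Mp \<mu> as * Xmono X as) has_sum S1) {1..} \<and>
              ((\<lambda>dy. \<Sum>bs\<in>mlists dy. coefW c M W Mp \<mu> bs * Xmono X bs) has_sum S2) {1..} \<and>
              ((\<lambda>(dx, dy). \<Sum>as\<in>mlists dx. \<Sum>bs\<in>mlists dy.
                   coefT c M W Mp \<mu> as bs * Xmono X as * Xmono X bs) has_sum S3) ({1..} \<times> {1..}) \<and>
              (\<Sum>i\<in>UNIV. M $ \<mu> $ i * h i ((Mp *v X) $ i) ((W *v (Mp *v X)) $ i))
                = C \<mu> + S1 + S2 + S3)"
proof -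
  obtain r co where r: "\<And>i. r i > 0" and co: "\<And>i x y. \<bar>x\<bar> < r i \<Longrightarrow> \<bar>y\<bar> < r i \<Longrightarrow>
      ((\<lambda>(k, l). co i k l * x ^ k * y ^ l) has_sum h i x y) UNIV"
    using real_analytic2_family_at_origin[OF assms(2)] by blast
  define U where "U = {X. \<forall>i. \<bar>(Mp *v X) $ i\<bar> < r i} \<inter> {X. \<forall>i. \<bar>((W ** Mp) *v X) $ i\<bar> < r i}"
  have "open U"
    unfolding U_def by (intro open_Int open_Collect_abs_matrix_vector_less)
  moreover have "0 \<in> U"
    using r by (simp add: U_def)
  ultimately show ?thesis
    by (intro exI[of _ co] exI[of _ "\<lambda>\<mu>. \<Sum>i\<in>UNIV. M $ \<mu> $ i * co i 0 0"] exI[of _ U]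
        conjI ballI allI reduced_field_expansion co)
      (auto simp: U_def matrix_vector_mul_assoc)
qed

end
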